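(* As $n\to\infty$ (over integers $n>(p+s)^4$), \[ \max_{0 \leqslant i \leqslant p-1+s} |\rho_{i}| \leqslant 2^{sn} \cdot p^{pn+o(n)}, \] where $|\cdot|$ is the usual absolute value.
   Context: Let $p\geqslant 5$ be a prime and $s$ a positive integer. Write $v_p$ for the $p$-adic valuation and $(\alpha)_k=\alpha(\alpha+1)\cdots(\alpha+k-1)$. Put $N_0=v_p(p-1+s)$ and $M_0=p^{2+N_0}s-1$. For an integer $n>(p+s)^4$ let \[R_n(t)=p^{pn}\, n!^s\, t^{M_0}\,\frac{\prod_{j=1}^{p-1}(t+\frac{j}{p})_n}{(t)_{n+1}^{p-1+s}}\in\mathbb{Q}(t),\] with partial fraction decomposition $R_n(t)=\sum_{i=1}^{p-1+s}\sum_{k=1}^{n} r_{i,k}(t+k)^{-i}$, $r_{i,k}\in\mathbb{Q}$. Set $\rho_i=\sum_{k=1}^n r_{i,k}$ for $1\leqslant i\leqslant p-1+s$, $\rho_{0,j/p}=-\sum_{i=1}^{p-1+s}\sum_{k=1}^n\sum_{\nu=0}^{k-1} r_{i,k}(\nu+\frac{j}{p})^{-i}$ for $1\leqslant j\leqslant p-1$, and $\rho_0=\sum_{j=1}^{p-1}\rho_{0,j/p}$. These depend on $n$. *)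

theory Defs
  imports "HOL-Analysis.Analysis" "HOL-Computational_Algebra.Primes"
begin

definition N0 :: "nat \<Rightarrow> nat \<Rightarrow> nat" where
  "N0 p s = multiplicity p (p - 1 + s)"

definition M0 :: "nat \<Rightarrow> nat \<Rightarrow> nat" where
  "M0 p s = p ^ (2 + N0 p s) * s - 1"

definition Rn :: "nat \<Rightarrow> nat \<Rightarrow> nat \<Rightarrow> real \<Rightarrow> real" where
  "Rn p s n t = real p ^ (p * n) * fact n ^ s * t ^ M0 p s *
     (\<Prod>j=1..p-1. pochhammer (t + real j / real p) n)
     / pochhammer t (n + 1) ^ (p - 1 + s)"

text \<open>The partial fraction coefficients r_{i,k} (1 <= i <= p-1+s, 1 <= k <= n),
  extended by 0 outside this range; they are the unique coefficients with
  R_n(t) = sum r_{i,k} (t+k)^{-i} as rational functions, i.e. for all t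
  outside the poles 0,-1,...,-n.\<close>
definition pfc :: "nat \<Rightarrow> nat \<Rightarrow> nat \<Rightarrow> nat \<Rightarrow> nat \<Rightarrow> real" where
  "pfc p s n = (THE r.
      (\<forall>i k. r i k \<noteq> 0 \<longrightarrow> 1 \<le> i \<and> i \<le> p - 1 + s \<and> 1 \<le> k \<and> k \<le> n) \<and>
      (\<forall>t::real. (\<forall>k\<in>{0..n}. t \<noteq> - real k) \<longrightarrow>
          Rn p s n t = (\<Sum>i=1..p-1+s. \<Sum>k=1..n. r i k / (t + real k) ^ i)))"

definition rho0j :: "nat \<Rightarrow> nat \<Rightarrow> nat \<Rightarrow> nat \<Rightarrow> real" where
  "rho0j p s n j = - (\<Sum>i=1..p-1+s. \<Sum>k=1..n. \<Sum>\<nu><k.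
      pfc p s n i k / (real \<nu> + real j / real p) ^ i)"

definition rho :: "nat \<Rightarrow> nat \<Rightarrow> nat \<Rightarrow> nat \<Rightarrow> real" where
  "rho p s n i = (if i = 0 then (\<Sum>j=1..p-1. rho0j p s n j)
                  else (\<Sum>k=1..n. pfc p s n i k))"

end

theory Submission
  imports Defs "HOL-Complex_Analysis.Complex_Analysis" "HOL-Real_Asymp.Real_Asymp"
begin

text \<open>Cancelling \<open>t^(p-1+s)\<close>, \<open>R\<^sub>n\<close> becomes a proper rational function whose poles are
  \<open>-1, ..., -n\<close>, each of order \<open>p-1+s\<close>; the \<open>r\<^sub>i\<^sub>,\<^sub>k\<close> are the coefficients of its
  partial fraction expansion. By Cauchy's formula on the circle \<open>|z + k| = 1/2\<close>, each
  coefficient is bounded by the maximum of \<open>|R\<^sub>n|\<close> on that circle. There every numerator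
  factor \<open>z + m + j/p\<close> has modulus at most \<open>|m + j/p - k| + 1/2\<close> and every denominator
  factor \<open>z + k'\<close> modulus at least \<open>|k' - k| - 1/2\<close>, so, up to factors polynomial in \<open>n\<close>,
  \<open>|R\<^sub>n|\<close> is at most \<open>p^(pn) (n!/((k-1)! (n-k)!))^s \<le> p^(pn) (n 2^n)^s\<close>.
  Summing the coefficients (for \<open>\<rho>\<^sub>0\<close> after weighting them by \<open>(\<nu> + j/p)^(-i) \<le> p^(p-1+s)\<close>)
  gives \<open>|\<rho>\<^sub>i| \<le> 2^(sn) p^(pn) poly(n)\<close>, and \<open>poly(n) \<le> p^(\<epsilon>n)\<close> for large \<open>n\<close>.\<close>

section \<open>Partial fraction expansions\<close>

definition has_partial_fractions :: "'a::field multiset \<Rightarrow> ('a \<Rightarrow> 'a) \<Rightarrow> bool" where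
  "has_partial_fractions M f \<longleftrightarrow>
     (\<exists>c. \<forall>z. z \<notin># M \<longrightarrow> f z = (\<Sum>a\<in>set_mset M. \<Sum>i=1..count M a. c a i / (z - a) ^ i))"

abbreviation pole_prod :: "'a::field multiset \<Rightarrow> 'a \<Rightarrow> 'a" where
  "pole_prod M z \<equiv> (\<Prod>a\<in>#M. z - a)"

lemma pole_prod_sum:
  "finite A \<Longrightarrow> pole_prod (\<Sum>a\<in>A. M a) z = (\<Prod>a\<in>A. pole_prod (M a) z)"
  by (induction A rule: finite_induct) auto

lemma has_partial_fractions_cong:
  "has_partial_fractions M f \<Longrightarrow> (\<And>z. z \<notin># M \<Longrightarrow> f z = g z) \<Longrightarrow> has_partial_fractions M g"
  unfolding has_partial_fractions_def by metis

lemma has_partial_fractions_subset: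
  assumes "M1 \<subseteq># M" "has_partial_fractions M1 f"
  shows "has_partial_fractions M f"
proof -
  from assms(2) obtain c where c:
    "\<And>z. z \<notin># M1 \<Longrightarrow> f z = (\<Sum>a\<in>set_mset M1. \<Sum>i=1..count M1 a. c a i / (z - a) ^ i)"
    unfolding has_partial_fractions_def by blast
  define c' where "c' a i = (if i \<le> count M1 a then c a i else 0)" for a i
  have "f z = (\<Sum>a\<in>set_mset M. \<Sum>i=1..count M a. c' a i / (z - a) ^ i)" if "z \<notin># M" for z
  proof -
    have inner: "(\<Sum>i=1..count M a. c' a i / (z - a) ^ i) = (\<Sum>i=1..count M1 a. c a i / (z - a) ^ i)"
      for a
    proof -
      have "count M1 a \<le> count M a" using assms(1) by (simp add: subseteq_mset_def)
      then have "(\<Sum>i=1..count M a. c' a i / (z - a) ^ i) = (\<Sum>i=1..count M1 a. c' a i / (z - a) ^ i)"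
        by (intro sum.mono_neutral_right) (auto simp: c'_def)
      then show ?thesis by (simp add: c'_def)
    qed
    have "(\<Sum>a\<in>set_mset M. \<Sum>i=1..count M a. c' a i / (z - a) ^ i)
        = (\<Sum>a\<in>set_mset M1. \<Sum>i=1..count M1 a. c a i / (z - a) ^ i)"
      unfolding inner using set_mset_mono[OF assms(1)]
      by (intro sum.mono_neutral_right) (auto simp: not_in_iff)
    moreover have "z \<notin># M1" using that set_mset_mono[OF assms(1)] by blast
    ultimately show ?thesis using c by simp
  qed
  then show ?thesis unfolding has_partial_fractions_def by (intro exI[of _ c']) blast
qed

lemma has_partial_fractions_add:
  assumes "has_partial_fractions M f" "has_partial_fractions M g"
  shows "has_partial_fractions M (\<lambda>z. f z + g z)"
proof -
  obtain c where c: "\<And>z. z \<notin># M \<Longrightarrow> f z = (\<Sum>a\<in>set_mset M. \<Sum>i=1..count M a. c a i / (z - a) ^ i)"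
    using assms(1) unfolding has_partial_fractions_def by blast
  obtain d where d: "\<And>z. z \<notin># M \<Longrightarrow> g z = (\<Sum>a\<in>set_mset M. \<Sum>i=1..count M a. d a i / (z - a) ^ i)"
    using assms(2) unfolding has_partial_fractions_def by blast
  have "f z + g z = (\<Sum>a\<in>set_mset M. \<Sum>i=1..count M a. (c a i + d a i) / (z - a) ^ i)"
    if "z \<notin># M" for z
    unfolding c[OF that] d[OF that] add_divide_distrib sum.distrib ..
  then show ?thesis
    unfolding has_partial_fractions_def by (intro exI[of _ "\<lambda>a i. c a i + d a i"]) blast
qed

lemma has_partial_fractions_cmult:
  assumes "has_partial_fractions M f"
  shows "has_partial_fractions M (\<lambda>z. u * f z)"
proof -
  obtain c where c: "\<And>z. z \<notin># M \<Longrightarrow> f z = (\<Sum>a\<in>set_mset M. \<Sum>i=1..count M a. c a i / (z - a) ^ i)"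
    using assms unfolding has_partial_fractions_def by blast
  have "u * f z = (\<Sum>a\<in>set_mset M. \<Sum>i=1..count M a. u * c a i / (z - a) ^ i)" if "z \<notin># M" for z
    unfolding c[OF that] sum_distrib_left times_divide_eq_right ..
  then show ?thesis
    unfolding has_partial_fractions_def by (intro exI[of _ "\<lambda>a i. u * c a i"]) blast
qed

lemma has_partial_fractions_power:
  assumes "m \<ge> 1"
  shows "has_partial_fractions (replicate_mset m a) (\<lambda>z. 1 / (z - a) ^ m)"
proof -
  have "(\<Sum>i=1..m. (if i = m then 1 else 0) / (z - a) ^ i)
      = (\<Sum>i\<in>{1..m}. if i = m then 1 / (z - a) ^ i else 0)" for z
    by (rule sum.cong) auto
  then have "1 / (z - a) ^ m
      = (\<Sum>b\<in>set_mset (replicate_mset m a). \<Sum>i=1..count (replicate_mset m a) b.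
           (if i = m then 1 else 0) / (z - b) ^ i)" for z
    using assms by simp
  then show ?thesis
    unfolding has_partial_fractions_def by (intro exI[of _ "\<lambda>b i. if i = m then 1 else 0"]) blast
qed

lemma has_partial_fractions_inverse:
  fixes M :: "'a::field multiset"
  assumes "M \<noteq> {#}"
  shows "has_partial_fractions M (\<lambda>z. 1 / pole_prod M z)"
  using assms
proof (induction "size M" arbitrary: M rule: less_induct)
  case less
  then obtain a where a: "a \<in># M" by (meson multiset_nonemptyE)
  show ?case
  proof (cases "set_mset M = {a}")
    case True
    then have M: "M = replicate_mset (size M) a"
      using set_mset_subset_singletonD[of M a] by simp
    have "1 \<le> size M" using less.prems by (cases M) auto
    then show ?thesis by (subst (1 2) M) (simp add: has_partial_fractions_power)
  next
    case False
    then obtain b where b: "b \<in># M" "b \<noteq> a" using a by blast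
    define M' where "M' = M - {#a#} - {#b#}"
    have "b \<in># M - {#a#}" using b by (simp add: in_diff_count)
    then have M: "M = add_mset a (add_mset b M')"
      unfolding M'_def using a by (metis insert_DiffM)
    have "has_partial_fractions M (\<lambda>z. 1 / pole_prod (add_mset a M') z)"
      by (rule has_partial_fractions_subset[OF _ less.hyps]) (auto simp: M)
    moreover have "has_partial_fractions M (\<lambda>z. 1 / pole_prod (add_mset b M') z)"
      by (rule has_partial_fractions_subset[OF _ less.hyps]) (auto simp: M)
    ultimately have "has_partial_fractions M
        (\<lambda>z. 1 / (a - b) * (1 / pole_prod (add_mset a M') z)
           + - (1 / (a - b)) * (1 / pole_prod (add_mset b M') z))"
      by (intro has_partial_fractions_add has_partial_fractions_cmult)
    then show ?thesis
    proof (rule has_partial_fractions_cong)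
      fix z assume "z \<notin># M"
      then have nz: "z - a \<noteq> 0" "z - b \<noteq> 0" "pole_prod M' z \<noteq> 0" "z - a \<noteq> z - b"
        using b by (auto simp: M)
      have key: "1 / d * (1 / (x * Q)) + - (1 / d) * (1 / (y * Q)) = 1 / (x * (y * Q))"
        if "x \<noteq> 0" "y \<noteq> 0" "Q \<noteq> 0" "x \<noteq> y" "d = y - x" for x y Q d :: 'a
        using that by (simp add: divide_simps)
      show "1 / (a - b) * (1 / pole_prod (add_mset a M') z)
          + - (1 / (a - b)) * (1 / pole_prod (add_mset b M') z) = 1 / pole_prod M z"
        unfolding M image_mset_add_mset prod_mset.add_mset by (rule key) (use nz in auto)
    qed
  qed
qed

lemma has_partial_fractions_proper:
  fixes M N :: "'a::field multiset"
  assumes "size N < size M"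
  shows "has_partial_fractions M (\<lambda>z. pole_prod N z / pole_prod M z)"
  using assms
proof (induction N arbitrary: M)
  case empty
  then have "M \<noteq> {#}" by auto
  then show ?case using has_partial_fractions_inverse by simp
next
  case (add b N)
  then obtain a where "a \<in># M" by (metis multiset_nonemptyE size_empty not_less0)
  define M' where "M' = M - {#a#}"
  have M: "M = add_mset a M'" using \<open>a \<in># M\<close> by (simp add: M'_def)
  have "has_partial_fractions M' (\<lambda>z. pole_prod N z / pole_prod M' z)"
    by (rule add.IH) (use add.prems in \<open>simp add: M\<close>)
  then have "has_partial_fractions M (\<lambda>z. pole_prod N z / pole_prod M' z)"
    by (rule has_partial_fractions_subset[rotated]) (simp add: M)
  moreover have "has_partial_fractions M (\<lambda>z. pole_prod N z / pole_prod M z)"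
    by (rule add.IH) (use add.prems in simp)
  ultimately have "has_partial_fractions M
      (\<lambda>z. pole_prod N z / pole_prod M' z + (a - b) * (pole_prod N z / pole_prod M z))"
    by (intro has_partial_fractions_add has_partial_fractions_cmult)
  then show ?case
  proof (rule has_partial_fractions_cong)
    fix z assume "z \<notin># M"
    then have "z - a \<noteq> 0" "pole_prod M' z \<noteq> 0" by (auto simp: M)
    moreover have key: "R / Q + d * (R / (x * Q)) = (y * R) / (x * Q)"
      if "x \<noteq> 0" "Q \<noteq> 0" "y = x + d" for x y Q R d :: 'a
      using that by (simp add: field_simps)
    ultimately show "pole_prod N z / pole_prod M' z + (a - b) * (pole_prod N z / pole_prod M z)
        = pole_prod (add_mset b N) z / pole_prod M z"
      unfolding M image_mset_add_mset prod_mset.add_mset by (intro key) auto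
  qed
qed

lemma isCont_eventually_const:
  fixes h :: "'a::{perfect_space,t2_space} \<Rightarrow> 'b::t2_space"
  assumes "isCont h x" "\<forall>\<^sub>F t in at x. h t = c"
  shows "h x = c"
proof -
  have "(h \<longlongrightarrow> h x) (at x)" using assms(1) by (simp add: isCont_def)
  moreover have "(h \<longlongrightarrow> c) (at x)" using assms(2) by (simp add: tendsto_eventually)
  ultimately show ?thesis by (rule tendsto_unique[OF at_neq_bot])
qed

lemma sum_mult_power_divide_power:
  fixes x :: "'a::field"
  assumes "x \<noteq> 0" "m \<le> P" "\<And>i. m < i \<Longrightarrow> i \<le> P \<Longrightarrow> a i = 0"
  shows "(\<Sum>i=1..P. a i * x ^ m / x ^ i) = (\<Sum>i=1..m. a i * x ^ (m - i))"
proof -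
  have "(\<Sum>i=1..P. a i * x ^ m / x ^ i) = (\<Sum>i=1..m. a i * x ^ m / x ^ i)"
    by (rule sum.mono_neutral_right) (use assms in auto)
  also have "\<dots> = (\<Sum>i=1..m. a i * x ^ (m - i))"
    using assms(1) by (intro sum.cong refl) (simp add: power_diff)
  finally show ?thesis .
qed

lemma real_partial_fractions_unique:
  fixes d :: "nat \<Rightarrow> nat \<Rightarrow> real"
  assumes zero: "\<And>t. (\<forall>k\<in>{0..n}. t \<noteq> - real k) \<Longrightarrow>
                   (\<Sum>i=1..P. \<Sum>k=1..n. d i k / (t + real k) ^ i) = 0"
    and i0: "i0 \<in> {1..P}" and k0: "k0 \<in> {1..n}"
  shows "d i0 k0 = 0"
proof (rule ccontr)
  assume "d i0 k0 \<noteq> 0"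
  define m where "m = Max {i\<in>{1..P}. d i k0 \<noteq> 0}"
  have "m \<in> {i\<in>{1..P}. d i k0 \<noteq> 0}"
    unfolding m_def using i0 \<open>d i0 k0 \<noteq> 0\<close> by (intro Max_in) auto
  then have m: "1 \<le> m" "m \<le> P" "d m k0 \<noteq> 0" by auto
  have above_m: "d i k0 = 0" if "m < i" "i \<le> P" for i
  proof (rule ccontr)
    assume "d i k0 \<noteq> 0"
    then have "i \<le> m" unfolding m_def using that by (intro Max_ge) auto
    with \<open>m < i\<close> show False by simp
  qed
  define K where "K = {1..n} - {k0}"
  \<comment> \<open>\<open>(t + k0)^m\<close> times the expansion, with the pole at \<open>-k0\<close> cancelled\<close>
  define h where "h t = (\<Sum>i=1..P. \<Sum>k\<in>K. d i k * (t + real k0) ^ m / (t + real k) ^ i)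
      + (\<Sum>i=1..m. d i k0 * (t + real k0) ^ (m - i))" for t
  have "h (- real k0) = (\<Sum>i=1..m. d i k0 * 0 ^ (m - i))"
    unfolding h_def using m by (simp add: power_0_left)
  also have "\<dots> = (\<Sum>i=1..m. if i = m then d i k0 else 0)"
    by (intro sum.cong) auto
  finally have h_at_pole: "h (- real k0) = d m k0"
    using m by simp
  have "\<forall>\<^sub>F t in at (- real k0). h t = 0"
    unfolding eventually_at
  proof (intro exI[of _ "1/2"] conjI ballI impI)
    fix t :: real assume t: "t \<noteq> - real k0 \<and> dist t (- real k0) < 1/2"
    have not_pole: "t \<noteq> - real k" for k
    proof (cases "k = k0")
      case False
      then have "1 \<le> \<bar>real k0 - real k\<bar>" by linarith
      then show ?thesis using t by (auto simp: dist_real_def)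
    qed (use t in auto)
    then have tk0: "t + real k0 \<noteq> 0" by (metis add_eq_0_iff2)
    have split_k0: "(\<Sum>k=1..n. f k) = (\<Sum>k\<in>K. f k) + f k0" for f :: "nat \<Rightarrow> real"
      using k0 by (simp add: K_def sum.remove add.commute)
    have "0 = (t + real k0) ^ m * (\<Sum>i=1..P. \<Sum>k=1..n. d i k / (t + real k) ^ i)"
      using zero not_pole by simp
    also have "\<dots> = (\<Sum>i=1..P. \<Sum>k=1..n. d i k * (t + real k0) ^ m / (t + real k) ^ i)"
      by (simp add: sum_distrib_left mult.commute)
    also have "\<dots> = h t"
      unfolding split_k0 sum.distrib h_def
      using sum_mult_power_divide_power[OF tk0, of m P "\<lambda>i. d i k0"] m above_m by simp
    finally show "h t = 0" ..
  qed simp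
  moreover have "isCont h (- real k0)"
    unfolding h_def by (intro continuous_intros) (auto simp: K_def)
  ultimately have "h (- real k0) = 0"
    by (intro isCont_eventually_const)
  with h_at_pole m show False by simp
qed

section \<open>Cauchy estimate for partial fraction coefficients\<close>

lemma has_contour_integral_pole_power_circlepath:
  fixes c :: complex
  assumes "1 \<le> i" "1 \<le> j" "0 < r"
  shows "((\<lambda>z. c / (z - b) ^ j * (z - b) ^ (i - 1)) has_contour_integral
           (if j = i then 2 * pi * \<i> * c else 0)) (circlepath b r)"
proof (cases "j < i")
  case True
  have "((\<lambda>z. c * (z - b) ^ (i - 1 - j)) has_contour_integral 0) (circlepath b r)"
    by (rule Cauchy_theorem_disc_simple[of _ b "r + 1"]) (use assms in \<open>auto intro!: holomorphic_intros\<close>)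
  then have "((\<lambda>z. c / (z - b) ^ j * (z - b) ^ (i - 1)) has_contour_integral 0) (circlepath b r)"
  proof (rule has_contour_integral_eq)
    fix z assume "z \<in> path_image (circlepath b r)"
    then have "z - b \<noteq> 0" using assms by auto
    then show "c * (z - b) ^ (i - 1 - j) = c / (z - b) ^ j * (z - b) ^ (i - 1)"
      using True by (simp add: power_diff)
  qed
  then show ?thesis using True by simp
next
  case False
  have "((\<lambda>z. c / (z - b) ^ Suc (j - i)) has_contour_integral
           (2 * pi * \<i>) / fact (j - i) * (deriv ^^ (j - i)) (\<lambda>w. c) b) (circlepath b r)"
    by (rule Cauchy_has_contour_integral_higher_derivative_circlepath) (use assms in auto)
  then have "((\<lambda>z. c / (z - b) ^ j * (z - b) ^ (i - 1)) has_contour_integral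
               (2 * pi * \<i>) / fact (j - i) * (deriv ^^ (j - i)) (\<lambda>w. c) b) (circlepath b r)"
  proof (rule has_contour_integral_eq)
    fix z assume "z \<in> path_image (circlepath b r)"
    then have "z - b \<noteq> 0" using assms by auto
    moreover have "j = Suc (j - i) + (i - 1)" using False assms by simp
    then have "(z - b) ^ j = (z - b) ^ Suc (j - i) * (z - b) ^ (i - 1)"
      by (metis power_add)
    ultimately show "c / (z - b) ^ Suc (j - i) = c / (z - b) ^ j * (z - b) ^ (i - 1)"
      by simp
  qed
  then show ?thesis using False by (cases "j = i") auto
qed

lemma partial_fraction_coeff_integral:
  fixes F :: "complex \<Rightarrow> complex" and c :: "complex \<Rightarrow> nat \<Rightarrow> complex"
  assumes expansion: "\<And>z. z \<notin># M \<Longrightarrow> F z = (\<Sum>a\<in>set_mset M. \<Sum>i=1..count M a. c a i / (z - a) ^ i)"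
    and b: "b \<in># M" and separated: "\<And>a. a \<in># M \<Longrightarrow> a \<noteq> b \<Longrightarrow> 1 \<le> norm (a - b)"
    and i: "1 \<le> i" "i \<le> count M b"
  shows "((\<lambda>z. F z * (z - b) ^ (i - 1)) has_contour_integral 2 * pi * \<i> * c b i) (circlepath b (1/2))"
proof -
  define \<gamma> where "\<gamma> = circlepath b (1/2)"
  have \<gamma>: "valid_path \<gamma>" "pathfinish \<gamma> = pathstart \<gamma>" "path_image \<gamma> = sphere b (1/2)"
    by (simp_all add: \<gamma>_def)
  define g where "g a j z = c a j / (z - a) ^ j * (z - b) ^ (i - 1)" for a j z
  have term_integral: "(g a j has_contour_integral (if a = b \<and> j = i then 2 * pi * \<i> * c b i else 0)) \<gamma>"
    if a: "a \<in># M" and j: "1 \<le> j" for a j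
  proof (cases "a = b")
    case False
    have "z \<noteq> a" if "z \<in> ball b 1" for z
      using that separated[OF a False] by (auto simp: dist_norm norm_minus_commute)
    then have "g a j holomorphic_on ball b 1"
      unfolding g_def by (intro holomorphic_intros) auto
    then have "(g a j has_contour_integral 0) \<gamma>"
      by (rule Cauchy_theorem_disc_simple) (use \<gamma> in auto)
    then show ?thesis using False by simp
  next
    case True
    then show ?thesis
      using has_contour_integral_pole_power_circlepath[OF i(1) j, of "1/2" "c b j" b]
      by (cases "j = i") (simp_all add: g_def[abs_def] \<gamma>_def)
  qed
  have "((\<lambda>z. \<Sum>a\<in>set_mset M. \<Sum>j=1..count M a. g a j z) has_contour_integral
        (\<Sum>a\<in>set_mset M. \<Sum>j=1..count M a. if a = b \<and> j = i then 2 * pi * \<i> * c b i else 0)) \<gamma>"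
    by (intro has_contour_integral_sum term_integral) auto
  moreover have "(\<Sum>a\<in>set_mset M. \<Sum>j=1..count M a. if a = b \<and> j = i then 2 * pi * \<i> * c b i else 0)
      = (\<Sum>a\<in>set_mset M. if a = b then 2 * pi * \<i> * c b i else 0)"
    using i by (intro sum.cong) auto
  ultimately have "((\<lambda>z. \<Sum>a\<in>set_mset M. \<Sum>j=1..count M a. g a j z) has_contour_integral
        2 * pi * \<i> * c b i) \<gamma>"
    using b by simp
  then show ?thesis
    unfolding \<gamma>_def[symmetric]
  proof (rule has_contour_integral_eq)
    fix z assume "z \<in> path_image \<gamma>"
    then have "norm (z - b) = 1/2" using \<gamma> by (auto simp: dist_norm norm_minus_commute)
    then have "z \<notin># M" using separated by force
    then show "(\<Sum>a\<in>set_mset M. \<Sum>j=1..count M a. g a j z) = F z * (z - b) ^ (i - 1)"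
      unfolding expansion[OF \<open>z \<notin># M\<close>] g_def by (simp add: sum_distrib_right)
  qed
qed

lemma partial_fraction_coeff_bound:
  fixes F :: "complex \<Rightarrow> complex" and c :: "complex \<Rightarrow> nat \<Rightarrow> complex"
  assumes expansion: "\<And>z. z \<notin># M \<Longrightarrow> F z = (\<Sum>a\<in>set_mset M. \<Sum>i=1..count M a. c a i / (z - a) ^ i)"
    and b: "b \<in># M" and separated: "\<And>a. a \<in># M \<Longrightarrow> a \<noteq> b \<Longrightarrow> 1 \<le> norm (a - b)"
    and i: "1 \<le> i" "i \<le> count M b"
    and bound: "\<And>z. norm (z - b) = 1/2 \<Longrightarrow> norm (F z) \<le> B"
  shows "norm (c b i) \<le> B"
proof -
  have "norm (F (b + 1/2)) \<le> B" by (rule bound) simp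
  then have "0 \<le> B" by (rule order_trans[OF norm_ge_zero])
  have "norm (2 * pi * \<i> * c b i) \<le> B * (1/2) ^ (i - 1) * (2 * pi * (1/2))"
  proof (rule has_contour_integral_bound_circlepath)
    show "((\<lambda>z. F z * (z - b) ^ (i - 1)) has_contour_integral 2 * pi * \<i> * c b i) (circlepath b (1/2))"
      by (rule partial_fraction_coeff_integral[OF expansion b separated i])
    fix z assume z: "norm (z - b) = 1/2"
    then have "norm (F z * (z - b) ^ (i - 1)) = norm (F z) * (1/2) ^ (i - 1)"
      by (simp only: norm_mult norm_power)
    then show "norm (F z * (z - b) ^ (i - 1)) \<le> B * (1/2) ^ (i - 1)"
      using bound[OF z] by (simp add: mult_right_mono)
  qed (use \<open>0 \<le> B\<close> in auto)
  then have "norm (c b i) \<le> B * (1/2) ^ (i - 1) / 2"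
    by (simp add: norm_mult field_simps)
  also have "\<dots> \<le> B"
    using \<open>0 \<le> B\<close> mult_left_le[of "(1/2) ^ (i - 1)" B] by (simp add: power_le_one)
  finally show ?thesis .
qed

section \<open>Factorial estimates\<close>

lemma fact_le_prod_minus_half: "fact K \<le> real (K + 1) * (\<Prod>d=1..K. real d - 1/2)"
proof (induction K)
  case (Suc K)
  have "0 \<le> (\<Prod>d=1..K. real d - 1/2)" by (auto intro!: prod_nonneg)
  have "fact (Suc K) = (real K + 1) * fact K" by simp
  also have "\<dots> \<le> (real K + 1) * (real (K + 1) * (\<Prod>d=1..K. real d - 1/2))"
    by (rule mult_left_mono[OF Suc.IH]) simp
  also have "\<dots> = (real K + 1) * (real K + 1) * (\<Prod>d=1..K. real d - 1/2)"
    by simp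
  also have "\<dots> \<le> (real K + 2) * (real (Suc K) - 1/2) * (\<Prod>d=1..K. real d - 1/2)"
    by (rule mult_right_mono) (use \<open>0 \<le> (\<Prod>d=1..K. real d - 1/2)\<close> in \<open>auto simp: algebra_simps\<close>)
  also have "\<dots> = real (Suc K + 1) * (\<Prod>d=1..Suc K. real d - 1/2)"
    by (simp add: mult_ac add_ac)
  finally show ?case .
qed simp

lemma prod_plus_half_le_fact: "(\<Prod>d=1..K. real d + 1/2) \<le> fact (K + 1)"
proof (induction K)
  case (Suc K)
  have "(\<Prod>d=1..Suc K. real d + 1/2) = (\<Prod>d=1..K. real d + 1/2) * (real K + 3/2)" by simp
  also have "\<dots> \<le> fact (K + 1) * (real K + 2)"
    using Suc.IH by (intro mult_mono) (auto intro: prod_nonneg)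
  also have "\<dots> = fact (Suc K + 1)" by (simp add: algebra_simps)
  finally show ?case .
qed simp

lemma prod_plus_two_eq_fact: "(\<Prod>e<K. real e + 2) = fact (K + 1)"
  by (induction K) (simp_all add: algebra_simps)

lemma prod_punctured_interval:
  fixes f :: "nat \<Rightarrow> 'a::comm_monoid_mult"
  assumes "k0 \<in> {1..n}"
  shows "(\<Prod>k\<in>{1..n}-{k0}. f k) = (\<Prod>d=1..k0-1. f (k0 - d)) * (\<Prod>d=1..n-k0. f (k0 + d))"
proof -
  have split: "{1..n}-{k0} = {1..<k0} \<union> {k0<..n}" using assms by auto
  have "(\<Prod>k\<in>{1..n}-{k0}. f k) = (\<Prod>k\<in>{1..<k0}. f k) * (\<Prod>k\<in>{k0<..n}. f k)"
    unfolding split by (rule prod.union_disjoint) auto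
  moreover have "(\<Prod>k\<in>{1..<k0}. f k) = (\<Prod>d=1..k0-1. f (k0 - d))"
    by (rule prod.reindex_bij_witness[of _ "\<lambda>k. k0 - k" "\<lambda>d. k0 - d"]) auto
  moreover have "(\<Prod>k\<in>{k0<..n}. f k) = (\<Prod>d=1..n-k0. f (k0 + d))"
    by (rule prod.reindex_bij_witness[of _ "\<lambda>d. k0 + d" "\<lambda>k. k - k0"]) auto
  ultimately show ?thesis by simp
qed

lemma prod_lessThan_split_at:
  fixes f :: "nat \<Rightarrow> 'a::comm_monoid_mult"
  assumes "k0 \<le> n"
  shows "(\<Prod>m<n. f m) = (\<Prod>d=1..k0. f (k0 - d)) * (\<Prod>e<n-k0. f (k0 + e))"
proof -
  have split: "{..<n} = {..<k0} \<union> {k0..<n}" using assms by auto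
  have "(\<Prod>m<n. f m) = (\<Prod>m<k0. f m) * (\<Prod>m\<in>{k0..<n}. f m)"
    unfolding split by (rule prod.union_disjoint) auto
  moreover have "(\<Prod>m<k0. f m) = (\<Prod>d=1..k0. f (k0 - d))"
    by (rule prod.reindex_bij_witness[of _ "\<lambda>m. k0 - m" "\<lambda>d. k0 - d"]) auto
  moreover have "(\<Prod>m\<in>{k0..<n}. f m) = (\<Prod>e<n-k0. f (k0 + e))"
    by (rule prod.reindex_bij_witness[of _ "\<lambda>e. k0 + e" "\<lambda>m. m - k0"]) auto
  ultimately show ?thesis by simp
qed

definition dist_prod_lower :: "nat \<Rightarrow> nat \<Rightarrow> real" where
  "dist_prod_lower n k0 = fact (k0 - 1) / real k0 * (fact (n - k0) / real (n - k0 + 1))"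

lemma dist_prod_lower_pos: "k0 \<in> {1..n} \<Longrightarrow> 0 < dist_prod_lower n k0"
  by (simp add: dist_prod_lower_def)

lemma prod_dist_minus_half_ge:
  assumes "k0 \<in> {1..n}"
  shows "dist_prod_lower n k0 \<le> (\<Prod>k\<in>{1..n}-{k0}. \<bar>real k - real k0\<bar> - 1/2)"
proof -
  have fact_le: "fact K / real (K + 1) \<le> (\<Prod>d=1..K. real d - 1/2)" for K
    using fact_le_prod_minus_half[of K] by (simp add: divide_le_eq mult.commute)
  have "(\<Prod>d=1..k0-1. \<bar>real (k0 - d) - real k0\<bar> - 1/2) = (\<Prod>d=1..k0-1. real d - 1/2)"
    by (rule prod.cong) auto
  moreover have "(\<Prod>d=1..n-k0. \<bar>real (k0 + d) - real k0\<bar> - 1/2) = (\<Prod>d=1..n-k0. real d - 1/2)"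
    by (rule prod.cong) auto
  moreover have "fact (k0 - 1) / real k0 \<le> (\<Prod>d=1..k0-1. real d - 1/2)"
    using fact_le[of "k0 - 1"] assms by simp
  ultimately show ?thesis
    unfolding prod_punctured_interval[OF assms] dist_prod_lower_def
    using fact_le[of "n - k0"] by (intro mult_mono) (auto intro!: prod_nonneg)
qed

lemma prod_dist_plus_half_le:
  fixes x :: real
  assumes "k0 \<le> n" "0 \<le> x" "x \<le> 1"
  shows "(\<Prod>m<n. \<bar>real m + x - real k0\<bar> + 1/2) \<le> fact (k0 + 1) * fact (n - k0 + 1)"
proof -
  have "(\<Prod>d=1..k0. \<bar>real (k0 - d) + x - real k0\<bar> + 1/2) \<le> (\<Prod>d=1..k0. real d + 1/2)"
    by (rule prod_mono) (use assms in auto)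
  also have "\<dots> \<le> fact (k0 + 1)"
    by (rule prod_plus_half_le_fact)
  finally have left: "(\<Prod>d=1..k0. \<bar>real (k0 - d) + x - real k0\<bar> + 1/2) \<le> fact (k0 + 1)" .
  have "(\<Prod>e<n-k0. \<bar>real (k0 + e) + x - real k0\<bar> + 1/2) \<le> (\<Prod>e<n-k0. real e + 2)"
    by (rule prod_mono) (use assms in auto)
  then have right: "(\<Prod>e<n-k0. \<bar>real (k0 + e) + x - real k0\<bar> + 1/2) \<le> fact (n - k0 + 1)"
    by (simp only: prod_plus_two_eq_fact)
  show ?thesis
    unfolding prod_lessThan_split_at[OF assms(1)]
    by (rule mult_mono[OF left right]) (auto intro: prod_nonneg)
qed

lemma fact_prod_le_dist_prod_lower:
  assumes "k0 \<in> {1..n}"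
  shows "fact (k0 + 1) * fact (n - k0 + 1) \<le> (real n + 1) ^ 5 * dist_prod_lower n k0"
proof -
  define a where "a = real k0"
  define b where "b = real (n - k0 + 1)"
  have "0 < a" "0 < b" "a \<le> real n" "b \<le> real n + 1" using assms by (auto simp: a_def b_def)
  have "fact (k0 + 1) = (a + 1) * a * fact (k0 - 1)"
    using assms fact_reduce[of k0] by (simp add: a_def mult_ac add_ac)
  moreover have "fact (n - k0 + 1) = b * fact (n - k0)" by (simp add: b_def)
  ultimately have "fact (k0 + 1) * fact (n - k0 + 1) = ((a + 1) * a * a * b * b) * dist_prod_lower n k0"
    unfolding dist_prod_lower_def a_def[symmetric] b_def[symmetric]
    using \<open>0 < a\<close> \<open>0 < b\<close> by (simp add: field_simps)
  also have "\<dots> \<le> ((real n + 1) * (real n + 1) * (real n + 1) * (real n + 1) * (real n + 1))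
        * dist_prod_lower n k0"
    using \<open>0 < a\<close> \<open>0 < b\<close> \<open>a \<le> real n\<close> \<open>b \<le> real n + 1\<close> dist_prod_lower_pos[OF assms]
    by (intro mult_right_mono mult_mono) auto
  finally show ?thesis
    by (simp add: power_def numeral_eq_Suc mult_ac)
qed

lemma fact_le_dist_prod_lower:
  assumes "k0 \<in> {1..n}"
  shows "fact n \<le> 2 ^ n * (real n + 1) ^ 3 * dist_prod_lower n k0"
proof -
  define a where "a = real k0"
  define b where "b = real (n - k0 + 1)"
  have "0 < a" "0 < b" "a \<le> real n + 1" "b \<le> real n + 1" using assms by (auto simp: a_def b_def)
  have "fact k0 = a * fact (k0 - 1)"
    using assms by (simp add: a_def fact_reduce)
  moreover have "(fact n :: real) = fact k0 * fact (n - k0) * real (n choose k0)"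
    using assms binomial_fact_lemma[of k0 n] by (metis atLeastAtMost_iff of_nat_fact of_nat_mult)
  ultimately have "fact n = (real (n choose k0) * (a * a * b)) * dist_prod_lower n k0"
    unfolding dist_prod_lower_def a_def[symmetric] b_def[symmetric]
    using \<open>0 < a\<close> \<open>0 < b\<close> by (simp add: field_simps)
  also have "\<dots> \<le> (2 ^ n * ((real n + 1) * (real n + 1) * (real n + 1))) * dist_prod_lower n k0"
  proof -
    have "real (n choose k0) \<le> 2 ^ n"
      by (metis binomial_le_pow2 of_nat_le_iff of_nat_numeral of_nat_power)
    then show ?thesis
      using \<open>0 < a\<close> \<open>0 < b\<close> \<open>a \<le> real n + 1\<close> \<open>b \<le> real n + 1\<close> dist_prod_lower_pos[OF assms]
      by (intro mult_right_mono mult_mono) auto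
  qed
  finally show ?thesis
    by (simp add: power3_eq_cube)
qed

section \<open>The reduced rational function\<close>

definition zero_order :: "nat \<Rightarrow> nat \<Rightarrow> nat" where
  "zero_order p s = M0 p s - (p - 1 + s)"

text \<open>\<open>R\<^sub>n\<close> with the factor \<open>t^(p-1+s)\<close> cancelled from numerator and denominator; unlike
  \<^const>\<open>Rn\<close> it makes sense at complex arguments.\<close>
definition Rn_reduced :: "nat \<Rightarrow> nat \<Rightarrow> nat \<Rightarrow> 'a::real_normed_field \<Rightarrow> 'a" where
  "Rn_reduced p s n z = of_real (real p ^ (p * n) * fact n ^ s) * z ^ zero_order p s
     * (\<Prod>j=1..p-1. \<Prod>m<n. z + of_real (real m + real j / real p))
     / (\<Prod>k=1..n. (z + of_nat k) ^ (p - 1 + s))"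

definition Rn_zeros :: "nat \<Rightarrow> nat \<Rightarrow> nat \<Rightarrow> complex multiset" where
  "Rn_zeros p s n = replicate_mset (zero_order p s) 0
     + (\<Sum>j\<in>{1..p-1}. \<Sum>m\<in>{..<n}. {# - of_real (real m + real j / real p) #})"

definition Rn_poles :: "nat \<Rightarrow> nat \<Rightarrow> nat \<Rightarrow> complex multiset" where
  "Rn_poles p s n = (\<Sum>k\<in>{1..n}. replicate_mset (p - 1 + s) (- of_nat k))"

lemma M0_ge:
  assumes "2 \<le> p" "1 \<le> s"
  shows "p - 1 + s \<le> M0 p s"
proof -
  have "p + s \<le> p * s + p * s" using assms by (intro add_mono) auto
  also have "\<dots> \<le> p * (p * s)" using assms by (simp add: mult_right_mono flip: mult_2)
  also have "\<dots> = p ^ 2 * s" by (simp add: power2_eq_square)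
  also have "\<dots> \<le> p ^ (2 + N0 p s) * s" using assms by (intro mult_right_mono power_increasing) auto
  finally show ?thesis unfolding M0_def using assms by arith
qed

lemma M0_less:
  assumes "1 \<le> p" "1 \<le> s"
  shows "M0 p s < (p + s) ^ 4"
proof -
  have "p ^ N0 p s dvd p - 1 + s" unfolding N0_def by (rule multiplicity_dvd)
  then have "p ^ N0 p s \<le> p + s" using assms by (auto dest: dvd_imp_le)
  then have "p ^ (2 + N0 p s) * s \<le> (p ^ 2 * (p + s)) * s"
    unfolding power_add by (intro mult_right_mono mult_left_mono) auto
  also have "\<dots> \<le> ((p + s) ^ 2 * (p + s)) * (p + s)"
    by (intro mult_mono power_mono) auto
  also have "\<dots> = (p + s) ^ 4" by (simp add: power2_eq_square power4_eq_xxxx)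
  finally have "p ^ (2 + N0 p s) * s \<le> (p + s) ^ 4" .
  moreover have "1 \<le> p ^ (2 + N0 p s) * s" using assms by simp
  ultimately show ?thesis unfolding M0_def by linarith
qed

lemma pochhammer_Suc_eq_mult_prod:
  "pochhammer (t :: 'a::comm_semiring_1) (Suc n) = t * (\<Prod>k=1..n. t + of_nat k)"
  by (simp add: pochhammer_Suc_prod prod.atLeast_Suc_atMost)

lemma Rn_eq_Rn_reduced:
  assumes "2 \<le> p" "1 \<le> s" "t \<noteq> 0" "\<forall>k\<in>{1..n}. t + real k \<noteq> 0"
  shows "Rn p s n t = Rn_reduced p s n t"
proof -
  define P where "P = p - 1 + s"
  define C where "C = real p ^ (p * n) * fact n ^ s"
  define Num where "Num = (\<Prod>j=1..p-1. \<Prod>m<n. t + (real m + real j / real p))"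
  define Den where "Den = (\<Prod>k=1..n. (t + real k) ^ P)"
  have "M0 p s = zero_order p s + P"
    using M0_ge[OF assms(1,2)] by (simp add: zero_order_def P_def)
  moreover have "pochhammer t (n + 1) ^ P = t ^ P * Den"
    by (simp add: Den_def pochhammer_Suc_eq_mult_prod power_mult_distrib prod_power_distrib)
  moreover have "(\<Prod>j=1..p-1. pochhammer (t + real j / real p) n) = Num"
    unfolding Num_def by (simp add: pochhammer_prod atLeast0LessThan algebra_simps)
  ultimately have "Rn p s n t = (C * t ^ zero_order p s * Num) * t ^ P / (Den * t ^ P)"
    unfolding Rn_def C_def P_def[symmetric] by (simp add: power_add mult_ac)
  also have "\<dots> = C * t ^ zero_order p s * Num / Den"
    using assms(3) by simp
  also have "\<dots> = Rn_reduced p s n t"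
    by (simp add: Rn_reduced_def C_def Num_def Den_def P_def)
  finally show ?thesis .
qed

lemma Rn_reduced_of_real:
  "Rn_reduced p s n (complex_of_real t) = complex_of_real (Rn_reduced p s n t)"
  unfolding Rn_reduced_def by simp

lemma Rn_reduced_eq_pole_prod:
  "Rn_reduced p s n z = of_real (real p ^ (p * n) * fact n ^ s)
     * (pole_prod (Rn_zeros p s n) z / pole_prod (Rn_poles p s n) z)"
proof -
  have "pole_prod (Rn_zeros p s n) z
      = z ^ zero_order p s * (\<Prod>j=1..p-1. \<Prod>m<n. z - - of_real (real m + real j / real p))"
    unfolding Rn_zeros_def
    by (simp only: pole_prod_sum image_mset_union prod_mset.union finite_atLeastAtMost finite_lessThan)
      simp
  moreover have "pole_prod (Rn_poles p s n) z = (\<Prod>k=1..n. (z + of_nat k) ^ (p - 1 + s))"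
    unfolding Rn_poles_def by (simp add: pole_prod_sum)
  ultimately show ?thesis
    unfolding Rn_reduced_def by (simp only: diff_minus_eq_add) (simp add: mult.assoc)
qed

lemma size_Rn_zeros: "size (Rn_zeros p s n) = zero_order p s + (p - 1) * n"
  by (simp add: Rn_zeros_def)

lemma size_Rn_poles: "size (Rn_poles p s n) = n * (p - 1 + s)"
  by (simp add: Rn_poles_def)

lemma count_Rn_poles:
  assumes "k \<in> {1..n}"
  shows "count (Rn_poles p s n) (- of_nat k) = p - 1 + s"
  using assms by (simp add: Rn_poles_def count_sum if_distrib cong: if_cong)

lemma set_Rn_poles:
  assumes "1 \<le> s"
  shows "set_mset (Rn_poles p s n) = (\<lambda>k. - of_nat k) ` {1..n}"
  using assms by (auto simp: Rn_poles_def set_mset_sum)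

lemma has_partial_fractions_Rn_reduced:
  assumes "2 \<le> p" "1 \<le> s" "(p + s) ^ 4 < n"
  shows "has_partial_fractions (Rn_poles p s n) (Rn_reduced p s n)"
proof -
  have "zero_order p s \<le> M0 p s" by (simp add: zero_order_def)
  also have "\<dots> < (p + s) ^ 4" using assms by (intro M0_less) auto
  also have "\<dots> < n" by (rule assms(3))
  also have "\<dots> \<le> n * s" using assms by simp
  finally have "zero_order p s < n * s" .
  then have "size (Rn_zeros p s n) < size (Rn_poles p s n)"
    unfolding size_Rn_zeros size_Rn_poles by (simp add: algebra_simps)
  then have "has_partial_fractions (Rn_poles p s n)
      (\<lambda>z. of_real (real p ^ (p * n) * fact n ^ s)
         * (pole_prod (Rn_zeros p s n) z / pole_prod (Rn_poles p s n) z))"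
    by (intro has_partial_fractions_cmult has_partial_fractions_proper)
  then show ?thesis
    by (rule has_partial_fractions_cong) (simp add: Rn_reduced_eq_pole_prod)
qed

section \<open>Bounds on the circles around the poles\<close>

definition coeff_bound :: "nat \<Rightarrow> nat \<Rightarrow> nat \<Rightarrow> real" where
  "coeff_bound p s n = 2 ^ (s * n) * real p ^ (p * n)
     * (2 ^ (p - 1 + s) * (real n + 1) ^ (zero_order p s + 5 * (p - 1) + 3 * s))"

lemma prod_norm_shifts_le:
  fixes z :: complex
  assumes "1 \<le> p" "k0 \<in> {1..n}" "norm (z + of_nat k0) = 1/2"
  shows "(\<Prod>j=1..p-1. \<Prod>m<n. norm (z + of_real (real m + real j / real p)))
           \<le> (fact (k0 + 1) * fact (n - k0 + 1)) ^ (p - 1)"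
proof -
  have shift: "norm (z + of_real x) \<le> \<bar>x - real k0\<bar> + 1/2" for x
  proof -
    have "norm (z + of_real x) = norm ((z + of_nat k0) + of_real (x - real k0))" by simp
    also have "\<dots> \<le> norm (z + of_nat k0) + norm (of_real (x - real k0) :: complex)"
      by (rule norm_triangle_ineq)
    finally show ?thesis unfolding assms(3) norm_of_real by simp
  qed
  have "0 \<le> real j / real p" "real j / real p \<le> 1" if "j \<in> {1..p-1}" for j
    using that assms(1) by auto
  then have "(\<Prod>j=1..p-1. \<Prod>m<n. \<bar>real m + real j / real p - real k0\<bar> + 1/2)
      \<le> (\<Prod>j=1..p-1. fact (k0 + 1) * fact (n - k0 + 1))"
    using assms(2) by (intro prod_mono conjI prod_nonneg prod_dist_plus_half_le) auto
  moreover have "(\<Prod>j=1..p-1. \<Prod>m<n. norm (z + of_real (real m + real j / real p)))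
      \<le> (\<Prod>j=1..p-1. \<Prod>m<n. \<bar>real m + real j / real p - real k0\<bar> + 1/2)"
    by (intro prod_mono conjI prod_nonneg norm_ge_zero shift)
  ultimately show ?thesis by simp
qed

lemma prod_norm_poles_ge:
  fixes z :: complex
  assumes "k0 \<in> {1..n}" "norm (z + of_nat k0) = 1/2"
  shows "dist_prod_lower n k0 / 2 \<le> (\<Prod>k=1..n. norm (z + of_nat k))"
proof -
  have "\<bar>real k - real k0\<bar> - 1/2 \<le> norm (z + of_nat k)" for k
  proof -
    have "of_real (real k - real k0) + (z + of_nat k0) = z + of_nat k" by simp
    then show ?thesis
      using norm_diff_ineq[of "of_real (real k - real k0)" "z + of_nat k0"]
      unfolding assms(2) norm_of_real by (simp add: add.commute)
  qed
  then have "(\<Prod>k\<in>{1..n}-{k0}. \<bar>real k - real k0\<bar> - 1/2) \<le> (\<Prod>k\<in>{1..n}-{k0}. norm (z + of_nat k))"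
    by (intro prod_mono) (auto simp: abs_if)
  then have "dist_prod_lower n k0 \<le> (\<Prod>k\<in>{1..n}-{k0}. norm (z + of_nat k))"
    by (rule order_trans[OF prod_dist_minus_half_ge[OF assms(1)]])
  moreover have "(\<Prod>k=1..n. norm (z + of_nat k)) = 1/2 * (\<Prod>k\<in>{1..n}-{k0}. norm (z + of_nat k))"
    using assms by (simp add: prod.remove)
  moreover have "a / 2 \<le> c" if "a \<le> b" "c = 1/2 * b" for a b c :: real
    using that by simp
  ultimately show ?thesis by blast
qed

lemma norm_Rn_reduced_le:
  fixes z :: complex
  assumes "1 \<le> p" "k0 \<in> {1..n}" "norm (z + of_nat k0) = 1/2"
  shows "norm (Rn_reduced p s n z) \<le> coeff_bound p s n"
proof -
  define P where "P = p - 1 + s"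
  define L where "L = dist_prod_lower n k0"
  define U :: real where "U = fact (k0 + 1) * fact (n - k0 + 1)"
  define C :: real where "C = real p ^ (p * n) * fact n ^ s"
  define Num where "Num = (\<Prod>j=1..p-1. \<Prod>m<n. norm (z + of_real (real m + real j / real p)))"
  define Den where "Den = (\<Prod>k=1..n. norm (z + of_nat k))"
  have "0 < L" "0 \<le> U" "0 \<le> C"
    using dist_prod_lower_pos[OF assms(2)] by (simp_all add: L_def U_def C_def)
  have "norm z \<le> real n + 1"
    using norm_triangle_ineq4[of "z + of_nat k0" "of_nat k0"] assms(2,3) by simp
  have "norm (Rn_reduced p s n z) = C * norm z ^ zero_order p s * Num / Den ^ P"
    unfolding Rn_reduced_def Num_def Den_def C_def P_def
    by (simp only: norm_divide norm_mult norm_power norm_of_real prod_norm[symmetric]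
        prod_power_distrib abs_of_nonneg[OF \<open>0 \<le> C\<close>[unfolded C_def]])
  also have "\<dots> \<le> C * (real n + 1) ^ zero_order p s * U ^ (p - 1) / (L / 2) ^ P"
  proof (rule frac_le)
    show "0 \<le> C * (real n + 1) ^ zero_order p s * U ^ (p - 1)"
      using \<open>0 \<le> C\<close> \<open>0 \<le> U\<close> by simp
    show "C * norm z ^ zero_order p s * Num \<le> C * (real n + 1) ^ zero_order p s * U ^ (p - 1)"
      using \<open>norm z \<le> real n + 1\<close> \<open>0 \<le> C\<close> prod_norm_shifts_le[OF assms]
      unfolding Num_def U_def by (intro mult_mono mult_left_mono power_mono) (auto intro!: prod_nonneg)
    show "0 < (L / 2) ^ P" using \<open>0 < L\<close> by simp
    show "(L / 2) ^ P \<le> Den ^ P"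
      using prod_norm_poles_ge[OF assms(2,3)] \<open>0 < L\<close> unfolding L_def Den_def
      by (intro power_mono) auto
  qed
  also have "\<dots> = real p ^ (p * n) * (real n + 1) ^ zero_order p s
                   * (2 * (U / L)) ^ (p - 1) * (2 * (fact n / L)) ^ s"
    using \<open>0 < L\<close> by (simp add: C_def P_def power_add field_simps)
  also have "\<dots> \<le> real p ^ (p * n) * (real n + 1) ^ zero_order p s
                   * (2 * (real n + 1) ^ 5) ^ (p - 1) * (2 * (2 ^ n * (real n + 1) ^ 3)) ^ s"
  proof -
    have "U / L \<le> (real n + 1) ^ 5" "fact n / L \<le> 2 ^ n * (real n + 1) ^ 3"
      using fact_prod_le_dist_prod_lower[OF assms(2)] fact_le_dist_prod_lower[OF assms(2)] \<open>0 < L\<close>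
      by (simp_all add: U_def L_def divide_le_eq)
    then show ?thesis
      using \<open>0 < L\<close> \<open>0 \<le> U\<close> by (intro mult_mono power_mono mult_left_mono) auto
  qed
  also have "\<dots> = coeff_bound p s n"
    by (simp add: coeff_bound_def power_mult_distrib power_add power_mult[symmetric] mult_ac)
  finally show ?thesis .
qed

section \<open>The coefficients and the numbers \<open>\<rho>\<^sub>i\<close>\<close>

lemma pfc_eqI:
  assumes supp: "\<forall>i k. r i k \<noteq> 0 \<longrightarrow> 1 \<le> i \<and> i \<le> p - 1 + s \<and> 1 \<le> k \<and> k \<le> n"
    and expansion: "\<And>t. (\<forall>k\<in>{0..n}. t \<noteq> - real k) \<Longrightarrow>
                      Rn p s n t = (\<Sum>i=1..p-1+s. \<Sum>k=1..n. r i k / (t + real k) ^ i)"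
  shows "pfc p s n = r"
  unfolding pfc_def
proof (rule the_equality)
  fix r' assume r': "(\<forall>i k. r' i k \<noteq> 0 \<longrightarrow> 1 \<le> i \<and> i \<le> p - 1 + s \<and> 1 \<le> k \<and> k \<le> n) \<and>
      (\<forall>t. (\<forall>k\<in>{0..n}. t \<noteq> - real k) \<longrightarrow>
         Rn p s n t = (\<Sum>i=1..p-1+s. \<Sum>k=1..n. r' i k / (t + real k) ^ i))"
  have diff: "r' i k - r i k = 0" if "i \<in> {1..p-1+s}" "k \<in> {1..n}" for i k
  proof (rule real_partial_fractions_unique[OF _ that])
    fix t :: real assume "\<forall>k\<in>{0..n}. t \<noteq> - real k"
    then show "(\<Sum>i=1..p-1+s. \<Sum>k=1..n. (r' i k - r i k) / (t + real k) ^ i) = 0"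
      using r' expansion by (simp add: diff_divide_distrib sum_subtractf)
  qed
  show "r' = r"
  proof (intro ext)
    fix i k
    show "r' i k = r i k"
    proof (cases "1 \<le> i \<and> i \<le> p - 1 + s \<and> 1 \<le> k \<and> k \<le> n")
      case True
      then show ?thesis using diff by simp
    next
      case False
      then show ?thesis using r' supp by metis
    qed
  qed
qed (use assms in blast)

lemma pfc_eq_Re_coeff:
  assumes "2 \<le> p" "1 \<le> s"
    and expansion: "\<And>z. z \<notin># Rn_poles p s n \<Longrightarrow> Rn_reduced p s n z =
          (\<Sum>a\<in>set_mset (Rn_poles p s n). \<Sum>i=1..count (Rn_poles p s n) a. c a i / (z - a) ^ i)"
  shows "pfc p s n i k =
           (if 1 \<le> i \<and> i \<le> p - 1 + s \<and> 1 \<le> k \<and> k \<le> n then Re (c (- of_nat k) i) else 0)"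
proof -
  define r where "r i k = (if 1 \<le> i \<and> i \<le> p - 1 + s \<and> 1 \<le> k \<and> k \<le> n
                             then Re (c (- of_nat k) i) else 0)" for i k
  have "Rn p s n t = (\<Sum>i=1..p-1+s. \<Sum>k=1..n. r i k / (t + real k) ^ i)"
    if t: "\<forall>k\<in>{0..n}. t \<noteq> - real k" for t
  proof -
    have "complex_of_real t \<notin># Rn_poles p s n"
    proof
      assume "complex_of_real t \<in># Rn_poles p s n"
      then obtain k where "k \<in> {1..n}" "complex_of_real t = - of_nat k"
        by (auto simp: set_Rn_poles[OF assms(2)])
      then have "t = - real k" by (metis of_real_eq_iff of_real_minus of_real_of_nat_eq)
      with t \<open>k \<in> {1..n}\<close> show False by auto
    qed
    then have expansion_t: "complex_of_real (Rn_reduced p s n t)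
        = (\<Sum>k=1..n. \<Sum>i=1..p-1+s. c (- of_nat k) i / (complex_of_real t + of_nat k) ^ i)"
      by (simp add: expansion set_Rn_poles[OF assms(2)] sum.reindex inj_on_def count_Rn_poles
          flip: Rn_reduced_of_real)
    have "Rn_reduced p s n t = Re (complex_of_real (Rn_reduced p s n t))"
      by simp
    also have "\<dots> = Re (\<Sum>k=1..n. \<Sum>i=1..p-1+s. c (- of_nat k) i / complex_of_real ((t + real k) ^ i))"
      unfolding expansion_t by simp
    also have "\<dots> = (\<Sum>k=1..n. \<Sum>i=1..p-1+s. Re (c (- of_nat k) i) / (t + real k) ^ i)"
      by (simp only: Re_sum Re_divide_of_real)
    finally have "Rn_reduced p s n t = \<dots>" .
    moreover have "Rn p s n t = Rn_reduced p s n t"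
      using t by (intro Rn_eq_Rn_reduced[OF assms(1,2)]) force+
    ultimately show ?thesis
      by (subst sum.swap) (simp add: r_def)
  qed
  then have "pfc p s n = r"
    by (intro pfc_eqI) (auto simp: r_def)
  then show ?thesis by (simp add: r_def)
qed

lemma abs_pfc_le:
  assumes "2 \<le> p" "1 \<le> s" "(p + s) ^ 4 < n"
  shows "\<bar>pfc p s n i k\<bar> \<le> coeff_bound p s n"
proof -
  obtain c where expansion: "\<And>z. z \<notin># Rn_poles p s n \<Longrightarrow> Rn_reduced p s n z =
      (\<Sum>a\<in>set_mset (Rn_poles p s n). \<Sum>i=1..count (Rn_poles p s n) a. c a i / (z - a) ^ i)"
    using has_partial_fractions_Rn_reduced[OF assms] unfolding has_partial_fractions_def by blast
  have "0 \<le> coeff_bound p s n" by (simp add: coeff_bound_def)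
  moreover have "norm (c (- of_nat k) i) \<le> coeff_bound p s n"
    if k: "k \<in> {1..n}" and i: "1 \<le> i" "i \<le> p - 1 + s"
  proof (rule partial_fraction_coeff_bound[OF expansion])
    show "- of_nat k \<in># Rn_poles p s n"
      using k assms by (simp add: set_Rn_poles)
    show "1 \<le> norm (a - - of_nat k)" if a: "a \<in># Rn_poles p s n" "a \<noteq> - of_nat k" for a
    proof -
      obtain k' where "a = - of_nat k'"
        using a(1) set_Rn_poles[OF assms(2)] by auto
      with a(2) have "k' \<noteq> k" by auto
      then have "1 \<le> \<bar>real k - real k'\<bar>" by linarith
      moreover have "a - - of_nat k = complex_of_real (real k - real k')"
        using \<open>a = - of_nat k'\<close> by simp
      ultimately show ?thesis by (simp only: norm_of_real)
    qed
    show "norm (Rn_reduced p s n z) \<le> coeff_bound p s n"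
      if "norm (z - - of_nat k) = 1/2" for z :: complex
    proof (rule norm_Rn_reduced_le)
      show "norm (z + of_nat k) = 1/2" using that by simp
    qed (use assms k in auto)
  qed (use i k in \<open>simp_all add: count_Rn_poles\<close>)
  ultimately show ?thesis
    using pfc_eq_Re_coeff[OF assms(1,2) expansion, of i k] abs_Re_le_cmod order_trans by auto
qed

lemma inverse_power_shift_le:
  assumes "1 \<le> j" "i \<le> P" "1 \<le> p"
  shows "1 / (real \<nu> + real j / real p) ^ i \<le> real p ^ P"
proof -
  define x where "x = real \<nu> + real j / real p"
  have "1 / real p \<le> real j / real p"
    using assms by (intro divide_right_mono) auto
  then have "1 / real p \<le> x" unfolding x_def by linarith
  moreover have "0 < 1 / real p" using assms by simp
  ultimately have "0 < x" by linarith
  have "1 \<le> x * real p"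
    using \<open>1 / real p \<le> x\<close> assms by (simp add: divide_le_eq)
  then have "1 / x \<le> real p"
    using \<open>0 < x\<close> by (simp add: divide_le_eq mult.commute)
  then have "1 / x ^ i \<le> real p ^ i"
    using \<open>0 < x\<close> by (simp add: power_mono flip: power_one_over)
  also have "\<dots> \<le> real p ^ P" using assms by (intro power_increasing) auto
  finally show ?thesis unfolding x_def .
qed

lemma abs_rho0j_le:
  assumes "2 \<le> p" "1 \<le> s" "(p + s) ^ 4 < n" "1 \<le> j"
  shows "\<bar>rho0j p s n j\<bar> \<le> real (p - 1 + s) * real n * real n * (real p ^ (p - 1 + s) * coeff_bound p s n)"
proof -
  define P where "P = p - 1 + s"
  define B where "B = coeff_bound p s n"
  have "0 \<le> B" by (simp add: B_def coeff_bound_def)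
  have term_le: "\<bar>pfc p s n i k / (real \<nu> + real j / real p) ^ i\<bar> \<le> real p ^ P * B" if "i \<le> P" for i k \<nu>
  proof -
    have "\<bar>pfc p s n i k / (real \<nu> + real j / real p) ^ i\<bar>
        = \<bar>pfc p s n i k\<bar> * (1 / (real \<nu> + real j / real p) ^ i)"
      by simp
    also have "\<dots> \<le> B * real p ^ P"
      using abs_pfc_le[OF assms(1-3)] inverse_power_shift_le[OF assms(4) that] assms(1) \<open>0 \<le> B\<close>
      by (intro mult_mono) (auto simp: B_def)
    finally show ?thesis by (simp add: mult.commute)
  qed
  have "\<bar>rho0j p s n j\<bar> \<le> (\<Sum>i=1..P. \<Sum>k=1..n. \<Sum>\<nu><k. \<bar>pfc p s n i k / (real \<nu> + real j / real p) ^ i\<bar>)"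
    unfolding rho0j_def P_def abs_minus
    by (intro order_trans[OF sum_abs sum_mono] order_trans[OF sum_abs sum_mono] sum_abs)
  also have "\<dots> \<le> (\<Sum>i=1..P. \<Sum>k=1..n. \<Sum>\<nu><n. real p ^ P * B)"
    using term_le \<open>0 \<le> B\<close> by (intro sum_mono order_trans[OF sum_mono sum_mono2]) auto
  also have "\<dots> = real P * real n * real n * (real p ^ P * B)" by simp
  finally show ?thesis unfolding P_def B_def .
qed

lemma abs_rho_le:
  assumes "2 \<le> p" "1 \<le> s" "(p + s) ^ 4 < n"
  shows "\<bar>rho p s n i\<bar>
           \<le> real (p - 1) * real (p - 1 + s) * real p ^ (p - 1 + s) * (real n + 1) ^ 2 * coeff_bound p s n"
proof (cases "i = 0")
  case True
  have "\<bar>rho p s n i\<bar> \<le> (\<Sum>j=1..p-1. \<bar>rho0j p s n j\<bar>)"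
    using True by (simp add: rho_def)
  also have "\<dots> \<le> (\<Sum>j=1..p-1. real (p - 1 + s) * real n * real n * (real p ^ (p - 1 + s) * coeff_bound p s n))"
    using abs_rho0j_le[OF assms] by (intro sum_mono) auto
  also have "\<dots> \<le> real (p - 1) * real (p - 1 + s) * real p ^ (p - 1 + s) * (real n + 1) ^ 2 * coeff_bound p s n"
    by (simp add: coeff_bound_def power2_eq_square mult_left_mono mult_mono mult_ac)
  finally show ?thesis .
next
  case False
  have "\<bar>rho p s n i\<bar> \<le> (\<Sum>k=1..n. \<bar>pfc p s n i k\<bar>)"
    using False by (simp add: rho_def)
  also have "\<dots> \<le> real n * coeff_bound p s n"
    using abs_pfc_le[OF assms] sum_mono[of "{1..n}" "\<lambda>k. \<bar>pfc p s n i k\<bar>" "\<lambda>_. coeff_bound p s n"] by simp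
  also have "\<dots> \<le> real (p - 1) * real (p - 1 + s) * real p ^ (p - 1 + s) * (real n + 1) ^ 2 * coeff_bound p s n"
  proof (rule mult_right_mono)
    define K where "K = real (p - 1) * real (p - 1 + s) * real p ^ (p - 1 + s)"
    have "1 * 1 * 1 \<le> K"
      unfolding K_def using assms by (intro mult_mono) auto
    then have "1 * (real n + 1) ^ 2 \<le> K * (real n + 1) ^ 2"
      by (intro mult_right_mono) auto
    moreover have "real n \<le> (real n + 1) ^ 2" by (simp add: power2_eq_square algebra_simps)
    ultimately show "real n \<le> real (p - 1) * real (p - 1 + s) * real p ^ (p - 1 + s) * (real n + 1) ^ 2"
      unfolding K_def by linarith
  qed (simp add: coeff_bound_def)
  finally show ?thesis .
qed

lemma eventually_poly_le_powr:
  fixes K q \<epsilon> :: real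
  assumes "0 < \<epsilon>" "1 < q"
  shows "\<forall>\<^sub>F n in sequentially. K * (real n + 1) ^ E \<le> q powr (\<epsilon> * real n)"
  using assms by real_asymp

theorem lemma7p1:
  fixes p s :: nat
  assumes "prime p" and "p \<ge> 5" and "s \<ge> 1"
  shows "\<forall>\<epsilon>>0. \<forall>\<^sub>F n in sequentially. n > (p + s) ^ 4 \<longrightarrow>
           Max ((\<lambda>i. \<bar>rho p s n i\<bar>) ` {0..p-1+s})
             \<le> 2 ^ (s * n) * real p powr (real (p * n) + \<epsilon> * real n)"
proof (intro allI impI)
  fix \<epsilon> :: real assume "\<epsilon> > 0"
  define K where "K = real (p - 1) * real (p - 1 + s) * real p ^ (p - 1 + s) * 2 ^ (p - 1 + s)"
  define E where "E = zero_order p s + 5 * (p - 1) + 3 * s + 2"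
  have "\<forall>\<^sub>F n in sequentially. K * (real n + 1) ^ E \<le> real p powr (\<epsilon> * real n)"
    using \<open>\<epsilon> > 0\<close> \<open>p \<ge> 5\<close> by (intro eventually_poly_le_powr) auto
  then show "\<forall>\<^sub>F n in sequentially. n > (p + s) ^ 4 \<longrightarrow>
      Max ((\<lambda>i. \<bar>rho p s n i\<bar>) ` {0..p-1+s}) \<le> 2 ^ (s * n) * real p powr (real (p * n) + \<epsilon> * real n)"
  proof (rule eventually_mono, intro impI)
    fix n assume small: "K * (real n + 1) ^ E \<le> real p powr (\<epsilon> * real n)" and "(p + s) ^ 4 < n"
    have "\<bar>rho p s n i\<bar> \<le> 2 ^ (s * n) * (real p ^ (p * n) * (K * (real n + 1) ^ E))" for i
      using abs_rho_le[of p s n i] assms \<open>(p + s) ^ 4 < n\<close>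
      by (simp add: coeff_bound_def K_def E_def power_add power2_eq_square mult_ac)
    also have "\<dots> \<le> 2 ^ (s * n) * (real p ^ (p * n) * real p powr (\<epsilon> * real n))"
      using small by (intro mult_left_mono) auto
    also have "\<dots> = 2 ^ (s * n) * real p powr (real (p * n) + \<epsilon> * real n)"
      using \<open>p \<ge> 5\<close> by (simp only: powr_add powr_realpow[of "real p" "p * n"])
    finally show "Max ((\<lambda>i. \<bar>rho p s n i\<bar>) ` {0..p-1+s})
        \<le> 2 ^ (s * n) * real p powr (real (p * n) + \<epsilon> * real n)"
      by simp
  qed
qed

end
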